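(* The $k$-involutions $\mathcal{I}_{t_{(-1,-1)}}$, $\mathcal{I}_{t_{(-1,1)}}$ and $\mathcal{I}_{t_{(1,-1)}}$ of $G$ are pairwise isomorphic.
   Context: Let $k$ be a field with $\mathrm{char}(k)\neq 2$. Let $C$ be the split octonion algebra over $k$: $C=M_2(k)\times M_2(k)$ with elements $(x,y)$, $\bar x=\begin{bmatrix}x_{22}&-x_{12}\\-x_{21}&x_{11}\end{bmatrix}$ for $x=(x_{ij})$, multiplication $(x,y)(u,v)=(xu+\bar v y,\ vx+y\bar u)$, norm $N((x,y))=\det x-\det y$, identity $e=(I_2,0)$. Linear maps on $C$ are $8\times8$ matrices in the ordered basis $(E_{11},0),(E_{12},0),(E_{21},0),(E_{22},0),(0,E_{11}),(0,E_{12}),(0,E_{21}),(0,E_{22})$. $G=\mathrm{Aut}(C)$; $\mathcal{I}_g(x)=gxg^{-1}$. $t_{(\beta,\gamma)}=\mathrm{diag}(1,\beta\gamma,\beta^{-1}\gamma^{-1},1,\gamma^{-1},\beta,\beta^{-1},\gamma)$. A $k$-involution of $G$ is an automorphism of $G$ of order exactly $2$ defined over $k$; $\theta_1\cong\theta_2$ if $\theta_2=\mathcal{I}_g\theta_1\mathcal{I}_g^{-1}$ for some $g\in G(k)$. *)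

theory Defs
  imports "HOL-Analysis.Analysis"
begin

text \<open>2x2 matrices over k, written as (x11, x12, x21, x22).\<close>
type_synonym 'k m2 = "'k \<times> 'k \<times> 'k \<times> 'k"

fun m2_mul :: "'k::field m2 \<Rightarrow> 'k m2 \<Rightarrow> 'k m2" where
  "m2_mul (a11, a12, a21, a22) (b11, b12, b21, b22) =
     (a11*b11 + a12*b21, a11*b12 + a12*b22, a21*b11 + a22*b21, a21*b12 + a22*b22)"

fun m2_add :: "'k::field m2 \<Rightarrow> 'k m2 \<Rightarrow> 'k m2" where
  "m2_add (a11, a12, a21, a22) (b11, b12, b21, b22) = (a11+b11, a12+b12, a21+b21, a22+b22)"

fun m2_bar :: "'k::field m2 \<Rightarrow> 'k m2" where
  "m2_bar (x11, x12, x21, x22) = (x22, - x12, - x21, x11)"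

text \<open>Split octonions C = M2(k) x M2(k).\<close>
type_synonym 'k oct = "'k m2 \<times> 'k m2"

fun oct_mul :: "'k::field oct \<Rightarrow> 'k oct \<Rightarrow> 'k oct" where
  "oct_mul (x, y) (u, v) = (m2_add (m2_mul x u) (m2_mul (m2_bar v) y),
                            m2_add (m2_mul v x) (m2_mul y (m2_bar u)))"

text \<open>Coordinates in the ordered basis (E11,0),(E12,0),(E21,0),(E22,0),(0,E11),...,(0,E22),
  indexed by 0,...,7 of the numeral type 8.\<close>
definition oct_of_vec :: "'k::field ^ 8 \<Rightarrow> 'k oct" where
  "oct_of_vec w = ((w$0, w$1, w$2, w$3), (w$4, w$5, w$6, w$7))"

fun vec_of_oct :: "'k::field oct \<Rightarrow> 'k ^ 8" where
  "vec_of_oct ((a, b, c, d), (e, f, g, h)) =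
     (\<chi> i. if i = 0 then a else if i = 1 then b else if i = 2 then c else if i = 3 then d
           else if i = 4 then e else if i = 5 then f else if i = 6 then g else h)"

definition octmul :: "'k::field ^ 8 \<Rightarrow> 'k ^ 8 \<Rightarrow> 'k ^ 8" where
  "octmul v w = vec_of_oct (oct_mul (oct_of_vec v) (oct_of_vec w))"

text \<open>G(k) = Aut(C)(k): invertible k-linear maps (8x8 matrices) preserving the product.\<close>
definition Gk :: "('k::field ^ 8 ^ 8) set" where
  "Gk = {g. invertible g \<and> (\<forall>x y. g *v octmul x y = octmul (g *v x) (g *v y))}"

definition inn :: "'k::field ^ 8 ^ 8 \<Rightarrow> 'k ^ 8 ^ 8 \<Rightarrow> 'k ^ 8 ^ 8" where
  "inn g x = g ** x ** matrix_inv g"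

definition tdiag :: "'k::field \<Rightarrow> 'k \<Rightarrow> 'k ^ 8 ^ 8" where
  "tdiag \<beta> \<gamma> = (let d = vec_of_oct ((1, \<beta>*\<gamma>, inverse (\<beta>*\<gamma>), 1), (inverse \<gamma>, \<beta>, inverse \<beta>, \<gamma>))
                 in (\<chi> i j. if i = j then d$i else 0))"

definition inv_iso :: "('k::field ^ 8 ^ 8 \<Rightarrow> 'k ^ 8 ^ 8) \<Rightarrow> ('k ^ 8 ^ 8 \<Rightarrow> 'k ^ 8 ^ 8) \<Rightarrow> bool" where
  "inv_iso \<theta>1 \<theta>2 \<longleftrightarrow> (\<exists>g\<in>Gk. \<forall>x\<in>Gk. \<theta>2 x = inn g (\<theta>1 (inn (matrix_inv g) x)))"

end

theory Submission imports Defs begin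

(* Write \<tau>\<^sub>1 = t(-1,-1), \<tau>\<^sub>2 = t(-1,1), \<tau>\<^sub>3 = t(1,-1).  Each \<tau>\<^sub>i is an
   involutive diagonal matrix, and I_\<tau> \<cong> I_\<tau>' as soon as \<tau>' = g \<tau> g\<^sup>-\<^sup>1 for some g in G(k),
   because then I_\<tau>' = I_g I_\<tau> I_g\<^sup>-\<^sup>1.  So it suffices to exhibit three explicit
   automorphisms \<sigma>\<^sub>1\<^sub>2, \<sigma>\<^sub>1\<^sub>3, \<sigma>\<^sub>2\<^sub>3 of the split octonions with \<sigma>\<^sub>i\<^sub>j \<tau>\<^sub>i = \<tau>\<^sub>j \<sigma>\<^sub>i\<^sub>j.
   All three are signed permutations of the standard basis, so multiplicativity
   and the intertwining relations are finite coordinate computations.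

   The
   theorem follows by applying this to the three explicit automorphisms. *)

lemma index8_cases: "(i::8) = 0 \<or> i = 1 \<or> i = 2 \<or> i = 3 \<or> i = 4 \<or> i = 5 \<or> i = 6 \<or> i = 7"
proof (cases i rule: bit0_cases)
  case (of_int z)
  then have "z = 0 \<or> z = 1 \<or> z = 2 \<or> z = 3 \<or> z = 4 \<or> z = 5 \<or> z = 6 \<or> z = 7" by auto
  then show ?thesis using of_int by auto
qed

lemma oct_cases: obtains a b c d e f g h where "z = ((a, b, c, d), (e, f, g, h))"
  by (metis prod.exhaust)

lemma oct_of_vec_of_oct [simp]: "oct_of_vec (vec_of_oct z) = (z::'k::field oct)"
  by (cases z rule: oct_cases) (simp add: oct_of_vec_def)

lemma vec_of_oct_of_vec [simp]: "vec_of_oct (oct_of_vec x) = (x::'k::field ^ 8)"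
  unfolding vec_eq_iff oct_of_vec_def
proof
  fix i :: 8
  show "vec_of_oct ((x $ 0, x $ 1, x $ 2, x $ 3), x $ 4, x $ 5, x $ 6, x $ 7) $ i = x $ i"
    using index8_cases[of i] by (elim disjE) simp_all
qed

lemma matrix_inv_works:
  fixes A :: "'a::semiring_1 ^ 'n ^ 'm"
  assumes "invertible A"
  shows "A ** matrix_inv A = mat 1" "matrix_inv A ** A = mat 1"
proof -
  have "\<exists>A'. A ** A' = mat 1 \<and> A' ** A = mat 1" using assms by (simp add: invertible_def)
  then have "A ** matrix_inv A = mat 1 \<and> matrix_inv A ** A = mat 1"
    unfolding matrix_inv_def by (rule someI_ex)
  then show "A ** matrix_inv A = mat 1" "matrix_inv A ** A = mat 1" by simp_all
qed

lemma matrix_inv_unique: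
  fixes A :: "'a::semiring_1 ^ 'n ^ 'm"
  assumes "A ** B = mat 1" "B ** A = mat 1"
  shows "matrix_inv A = B"
proof -
  have inv: "matrix_inv A ** A = mat 1"
    using assms by (intro matrix_inv_works) (auto simp: invertible_def)
  have "matrix_inv A = matrix_inv A ** (A ** B)" using assms by simp
  also have "\<dots> = B" using inv by (simp add: matrix_mul_assoc)
  finally show ?thesis .
qed

lemma inv_iso_inn_conjugate:
  fixes g t1 t2 :: "'k::field ^ 8 ^ 8"
  assumes g: "g \<in> Gk" and t1: "invertible t1" and conj: "g ** t1 = t2 ** g"
  shows "inv_iso (inn t1) (inn t2)"
  unfolding inv_iso_def
proof (intro bexI[OF _ g] ballI)
  fix x
  define h where "h = matrix_inv g"
  define s1 where "s1 = matrix_inv t1"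
  have gh: "g ** h = mat 1" and hg: "h ** g = mat 1"
    using g matrix_inv_works[of g] by (simp_all add: Gk_def h_def)
  have "g ** t1 ** h = t2 ** g ** h" using conj by simp
  then have t2: "t2 = g ** t1 ** h" using gh by (simp add: matrix_mul_assoc[symmetric])
  have "t2 ** (g ** s1 ** h) = mat 1" "(g ** s1 ** h) ** t2 = mat 1"
    using t1 gh hg matrix_inv_works[of t1]
    by (simp_all add: t2 s1_def matrix_mul_assoc, simp_all add: matrix_mul_assoc[symmetric])
  then have t2_inv: "matrix_inv t2 = g ** s1 ** h" by (rule matrix_inv_unique)
  have h_inv: "matrix_inv h = g" using hg gh by (rule matrix_inv_unique)
  show "inn t2 x = inn g (inn t1 (inn (matrix_inv g) x))"
    unfolding inn_def h_def[symmetric] s1_def[symmetric] h_inv t2_inv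
    by (simp add: t2 matrix_mul_assoc)
qed

definition coord_map :: "('k::field oct \<Rightarrow> 'k oct) \<Rightarrow> 'k ^ 8 \<Rightarrow> 'k ^ 8" where
  "coord_map \<phi> = (\<lambda>x. vec_of_oct (\<phi> (oct_of_vec x)))"

definition oct_matrix :: "('k::field oct \<Rightarrow> 'k oct) \<Rightarrow> 'k ^ 8 ^ 8" where
  "oct_matrix \<phi> = matrix (coord_map \<phi>)"

lemma coord_map_linearI:
  fixes \<phi> :: "'k::field oct \<Rightarrow> 'k oct"
  assumes "\<And>x y. coord_map \<phi> (x + y) = coord_map \<phi> x + coord_map \<phi> y"
    and "\<And>c x. coord_map \<phi> (c *s x) = c *s coord_map \<phi> x"
  shows "Vector_Spaces.linear (*s) (*s) (coord_map \<phi>)"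
  unfolding Vector_Spaces.linear_iff using vec.vector_space_axioms assms by blast

lemma oct_matrix_mult_vec:
  assumes "Vector_Spaces.linear (*s) (*s) (coord_map \<phi>)"
  shows "oct_matrix \<phi> *v x = vec_of_oct (\<phi> (oct_of_vec x))"
  using assms unfolding oct_matrix_def by (simp add: matrix_works coord_map_def)

lemma oct_matrix_in_Gk:
  fixes \<phi> \<psi> :: "'k::field oct \<Rightarrow> 'k oct"
  assumes lin_\<phi>: "Vector_Spaces.linear (*s) (*s) (coord_map \<phi>)"
    and lin_\<psi>: "Vector_Spaces.linear (*s) (*s) (coord_map \<psi>)"
    and \<phi>\<psi>: "\<And>z. \<phi> (\<psi> z) = z" and \<psi>\<phi>: "\<And>z. \<psi> (\<phi> z) = z"
    and mult: "\<And>a b. \<phi> (oct_mul a b) = oct_mul (\<phi> a) (\<phi> b)"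
  shows "oct_matrix \<phi> \<in> Gk"
proof -
  note acts = oct_matrix_mult_vec[OF lin_\<phi>] oct_matrix_mult_vec[OF lin_\<psi>]
  have "oct_matrix \<phi> ** oct_matrix \<psi> = mat 1" "oct_matrix \<psi> ** oct_matrix \<phi> = mat 1"
    unfolding matrix_eq by (simp_all add: matrix_vector_mul_assoc[symmetric] acts \<phi>\<psi> \<psi>\<phi>)
  then have "invertible (oct_matrix \<phi>)" unfolding invertible_def by blast
  moreover have "oct_matrix \<phi> *v octmul x y = octmul (oct_matrix \<phi> *v x) (oct_matrix \<phi> *v y)"
    for x y by (simp add: acts octmul_def mult)
  ultimately show ?thesis unfolding Gk_def by blast
qed

lemma tdiag_mult_vec:
  "tdiag \<beta> \<gamma> *v x =
     (\<chi> i. vec_of_oct ((1, \<beta>*\<gamma>, inverse (\<beta>*\<gamma>), 1), (inverse \<gamma>, \<beta>, inverse \<beta>, \<gamma>)) $ i * x $ i)"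
proof -
  have "(\<Sum>j\<in>UNIV. (if i = j then d $ i else 0) * x $ j) = d $ i * x $ i" for d :: "'a ^ 8" and i
    by (simp add: if_distrib[of "\<lambda>z. z * _"] cong: if_cong)
  then show ?thesis
    unfolding tdiag_def Let_def by (simp add: matrix_vector_mult_def vec_eq_iff)
qed

lemma tdiag_involution:
  fixes \<beta> \<gamma> :: "'k::field"
  assumes "\<beta> * \<beta> = 1" and "\<gamma> * \<gamma> = 1"
  shows "tdiag \<beta> \<gamma> ** tdiag \<beta> \<gamma> = mat 1"
  unfolding matrix_eq
proof
  fix x :: "'k ^ 8"
  have inv: "inverse \<beta> = \<beta>" "inverse \<gamma> = \<gamma>" using assms by (simp_all add: inverse_unique)
  have \<beta>\<gamma>: "\<beta> * \<gamma> * (\<beta> * \<gamma>) = 1" using assms by (simp add: algebra_simps)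
  have "(\<beta> * \<gamma> * (\<beta> * \<gamma> * x $ i)) = x $ i" for i using \<beta>\<gamma> by (simp add: mult.assoc[symmetric])
  then show "(tdiag \<beta> \<gamma> ** tdiag \<beta> \<gamma>) *v x = mat 1 *v x"
    unfolding matrix_vector_mul_assoc[symmetric] tdiag_mult_vec vec_eq_iff
    using index8_cases by (auto simp: inv assms mult.assoc[symmetric])
qed

lemma tdiag_invertible:
  "\<beta> * \<beta> = 1 \<Longrightarrow> \<gamma> * \<gamma> = (1::'k::field) \<Longrightarrow> invertible (tdiag \<beta> \<gamma>)"
  unfolding invertible_def using tdiag_involution by blast

(* \<sigma>\<^sub>1\<^sub>2 conjugates t(-1,-1) to t(-1,1); it is itself an involution. *)

fun \<sigma>\<^sub>1\<^sub>2 :: "'k::field oct \<Rightarrow> 'k oct" where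
  "\<sigma>\<^sub>1\<^sub>2 ((a, b, c, d), (e, f, g, h)) = ((a, e, h, d), (b, -f, -g, c))"

(* \<sigma>\<^sub>1\<^sub>3 conjugates t(-1,-1) to t(1,-1); its inverse is \<sigma>\<^sub>1\<^sub>3'. *)

fun \<sigma>\<^sub>1\<^sub>3 :: "'k::field oct \<Rightarrow> 'k oct" where
  "\<sigma>\<^sub>1\<^sub>3 ((a, b, c, d), (e, f, g, h)) = ((a, e, h, d), (g, -c, b, -f))"

fun \<sigma>\<^sub>1\<^sub>3' :: "'k::field oct \<Rightarrow> 'k oct" where
  "\<sigma>\<^sub>1\<^sub>3' ((a, b, c, d), (e, f, g, h)) = ((a, g, -f, d), (b, -h, e, c))"

(* \<sigma>\<^sub>2\<^sub>3 conjugates t(-1,1) to t(1,-1); it fixes the first factor M\<^sub>2(k) and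
  its inverse is \<sigma>\<^sub>2\<^sub>3'. *)

fun \<sigma>\<^sub>2\<^sub>3 :: "'k::field oct \<Rightarrow> 'k oct" where
  "\<sigma>\<^sub>2\<^sub>3 ((a, b, c, d), (e, f, g, h)) = ((a, b, c, d), (-g, -h, e, f))"

fun \<sigma>\<^sub>2\<^sub>3' :: "'k::field oct \<Rightarrow> 'k oct" where
  "\<sigma>\<^sub>2\<^sub>3' ((a, b, c, d), (e, f, g, h)) = ((a, b, c, d), (g, h, -e, -f))"

lemma linear_\<sigma>\<^sub>1\<^sub>2: "Vector_Spaces.linear (*s) (*s) (coord_map (\<sigma>\<^sub>1\<^sub>2::'k::field oct \<Rightarrow> _))"
  and linear_\<sigma>\<^sub>1\<^sub>3: "Vector_Spaces.linear (*s) (*s) (coord_map (\<sigma>\<^sub>1\<^sub>3::'k::field oct \<Rightarrow> _))"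
  and linear_\<sigma>\<^sub>1\<^sub>3': "Vector_Spaces.linear (*s) (*s) (coord_map (\<sigma>\<^sub>1\<^sub>3'::'k::field oct \<Rightarrow> _))"
  and linear_\<sigma>\<^sub>2\<^sub>3: "Vector_Spaces.linear (*s) (*s) (coord_map (\<sigma>\<^sub>2\<^sub>3::'k::field oct \<Rightarrow> _))"
  and linear_\<sigma>\<^sub>2\<^sub>3': "Vector_Spaces.linear (*s) (*s) (coord_map (\<sigma>\<^sub>2\<^sub>3'::'k::field oct \<Rightarrow> _))"
  by (rule coord_map_linearI; simp add: coord_map_def oct_of_vec_def vec_eq_iff)+

lemma \<sigma>_inverses:
  "\<sigma>\<^sub>1\<^sub>2 (\<sigma>\<^sub>1\<^sub>2 z) = z" "\<sigma>\<^sub>1\<^sub>3 (\<sigma>\<^sub>1\<^sub>3' z) = z" "\<sigma>\<^sub>1\<^sub>3' (\<sigma>\<^sub>1\<^sub>3 z) = z"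
  "\<sigma>\<^sub>2\<^sub>3 (\<sigma>\<^sub>2\<^sub>3' z) = z" "\<sigma>\<^sub>2\<^sub>3' (\<sigma>\<^sub>2\<^sub>3 z) = z"
  by (cases z rule: oct_cases; simp)+

lemma \<sigma>_multiplicative:
  "\<sigma>\<^sub>1\<^sub>2 (oct_mul u v) = oct_mul (\<sigma>\<^sub>1\<^sub>2 u) (\<sigma>\<^sub>1\<^sub>2 v)"
  "\<sigma>\<^sub>1\<^sub>3 (oct_mul u v) = oct_mul (\<sigma>\<^sub>1\<^sub>3 u) (\<sigma>\<^sub>1\<^sub>3 v)"
  "\<sigma>\<^sub>2\<^sub>3 (oct_mul u v) = oct_mul (\<sigma>\<^sub>2\<^sub>3 u) (\<sigma>\<^sub>2\<^sub>3 v)"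
  by (cases u rule: oct_cases; cases v rule: oct_cases; simp add: algebra_simps)+

lemma \<sigma>_in_Gk:
  "oct_matrix (\<sigma>\<^sub>1\<^sub>2::'k::field oct \<Rightarrow> _) \<in> Gk"
  "oct_matrix (\<sigma>\<^sub>1\<^sub>3::'k::field oct \<Rightarrow> _) \<in> Gk"
  "oct_matrix (\<sigma>\<^sub>2\<^sub>3::'k::field oct \<Rightarrow> _) \<in> Gk"
  using oct_matrix_in_Gk[OF linear_\<sigma>\<^sub>1\<^sub>2 linear_\<sigma>\<^sub>1\<^sub>2]
    oct_matrix_in_Gk[OF linear_\<sigma>\<^sub>1\<^sub>3 linear_\<sigma>\<^sub>1\<^sub>3']
    oct_matrix_in_Gk[OF linear_\<sigma>\<^sub>2\<^sub>3 linear_\<sigma>\<^sub>2\<^sub>3']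
  by (simp_all add: \<sigma>_inverses \<sigma>_multiplicative)

lemma \<sigma>_intertwines:
  "oct_matrix \<sigma>\<^sub>1\<^sub>2 ** tdiag (-1) (-1) = tdiag (-1) 1 ** oct_matrix (\<sigma>\<^sub>1\<^sub>2::'k::field oct \<Rightarrow> _)"
  "oct_matrix \<sigma>\<^sub>1\<^sub>3 ** tdiag (-1) (-1) = tdiag 1 (-1) ** oct_matrix (\<sigma>\<^sub>1\<^sub>3::'k::field oct \<Rightarrow> _)"
  "oct_matrix \<sigma>\<^sub>2\<^sub>3 ** tdiag (-1) 1 = tdiag 1 (-1) ** oct_matrix (\<sigma>\<^sub>2\<^sub>3::'k::field oct \<Rightarrow> _)"
  unfolding matrix_eq matrix_vector_mul_assoc[symmetric] tdiag_mult_vec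
    oct_matrix_mult_vec[OF linear_\<sigma>\<^sub>1\<^sub>2] oct_matrix_mult_vec[OF linear_\<sigma>\<^sub>1\<^sub>3]
    oct_matrix_mult_vec[OF linear_\<sigma>\<^sub>2\<^sub>3]
  by (simp_all add: oct_of_vec_def vec_eq_iff)

theorem mainTheorem6:
  assumes "(2::'k::field) \<noteq> 0"
  shows "inv_iso (inn (tdiag (-1::'k) (-1))) (inn (tdiag (-1) 1))
       \<and> inv_iso (inn (tdiag (-1::'k) (-1))) (inn (tdiag 1 (-1)))
       \<and> inv_iso (inn (tdiag (-1::'k) 1)) (inn (tdiag 1 (-1)))"
proof -
  have \<tau>\<^sub>1: "invertible (tdiag (-1::'k) (-1))" and \<tau>\<^sub>2: "invertible (tdiag (-1::'k) 1)"
    by (simp_all add: tdiag_invertible)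
  show ?thesis
    using inv_iso_inn_conjugate[OF \<sigma>_in_Gk(1) \<tau>\<^sub>1 \<sigma>_intertwines(1)]
      inv_iso_inn_conjugate[OF \<sigma>_in_Gk(2) \<tau>\<^sub>1 \<sigma>_intertwines(2)]
      inv_iso_inn_conjugate[OF \<sigma>_in_Gk(3) \<tau>\<^sub>2 \<sigma>_intertwines(3)]
    by blast
qed

end
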